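(* Let $\mathit{VI}$ be a finite set of variables with $\#\mathit{VI}=n$, and let $\mathit{PSD}^{+}=\{sh\in\mathit{PSD}\mid\forall x\in\mathit{VI}:\{x\}\in sh\}$. Then $\mathit{PSD}^{\ddagger}:=\mathit{PSD}^{+}\sim\mathit{PS}=\{sh\in\mathit{PSD}\mid\mathit{VI}\in sh,\ \forall x\in\mathit{VI}:\{x\}\in sh\}$, and $\mathit{PSD}^{+}\sim\mathit{PSD}^{\ddagger}=\mathit{PS}$.
   Context: $\mathit{SG}=\wp(\mathit{VI})\setminus\{\emptyset\}$, $\mathit{SH}=\wp(\mathit{SG})$ ordered by inclusion. $\mathrm{pairs}(S)=\{T\subseteq S\mid\#T=2\}$, $\mathrm{pairs}(sh)=\bigcup_{S'\in sh}\mathrm{pairs}(S')$, $\mathit{PS}=\{\rho_{\mathit{PS}}(sh)\mid sh\in\mathit{SH}\}$ where $\rho_{\mathit{PS}}(sh)=\{S\in\mathit{SG}\mid\mathrm{pairs}(S)\subseteq\mathrm{pairs}(sh)\}$. $\mathit{PSD}=\{\rho_{\mathit{PSD}}(sh)\mid sh\in\mathit{SH}\}$ where $\rho_{\mathit{PSD}}(sh)=\{\,S\in\mathit{SG}\mid \forall T\subseteq S:\ \#T<2\implies S=\bigcup\{U\in sh\mid T\subseteq U\subseteq S\}\,\}$. Upper closure operators on a complete lattice $C$ are identified with their images (subsets closed under arbitrary meets); $\mathrm{uco}(C)$ is ordered by $\rho_1\sqsubseteq\rho_2$ iff $\rho_2(C)\subseteq\rho_1(C)$, with reduced product $\sqcap$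 the glb. For $D\subseteq C$ the image of some $\rho\in\mathrm{uco}(C)$, $C\sim D=\mathrm{lub}\{\rho_2\in\mathrm{uco}(C)\mid\rho\sqcap\rho_2=\mathit{id}_C\}$ (weak pseudo-complement); here $C=\mathit{PSD}^{+}$ (a complete lattice under inclusion) and $\mathit{PS}\subseteq\mathit{PSD}^{+}$. *)

theory Defs
  imports Main
begin

definition SG :: "'a set \<Rightarrow> 'a set set" where
  "SG VI = Pow VI - {{}}"

definition SH :: "'a set \<Rightarrow> 'a set set set" where
  "SH VI = Pow (SG VI)"

definition pairs :: "'a set \<Rightarrow> 'a set set" where
  "pairs S = {T. T \<subseteq> S \<and> card T = 2}"

definition pairs_sh :: "'a set set \<Rightarrow> 'a set set" where
  "pairs_sh sh = (\<Union>S'\<in>sh. pairs S')"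

definition rho_PS :: "'a set \<Rightarrow> 'a set set \<Rightarrow> 'a set set" where
  "rho_PS VI sh = {S \<in> SG VI. pairs S \<subseteq> pairs_sh sh}"

definition PS :: "'a set \<Rightarrow> 'a set set set" where
  "PS VI = rho_PS VI ` SH VI"

definition rho_PSD :: "'a set \<Rightarrow> 'a set set \<Rightarrow> 'a set set" where
  "rho_PSD VI sh = {S \<in> SG VI. \<forall>T. T \<subseteq> S \<and> card T < 2 \<longrightarrow>
       S = \<Union>{U \<in> sh. T \<subseteq> U \<and> U \<subseteq> S}}"

definition PSD :: "'a set \<Rightarrow> 'a set set set" where
  "PSD VI = rho_PSD VI ` SH VI"

definition PSD_plus :: "'a set \<Rightarrow> 'a set set set" where
  "PSD_plus VI = {sh \<in> PSD VI. \<forall>x\<in>VI. {x} \<in> sh}"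

text \<open>Generic upper closure operators on a complete lattice C (a family of sets
  ordered by inclusion), identified with their images.\<close>

definition lat_glb :: "'b set set \<Rightarrow> 'b set set \<Rightarrow> 'b set" where
  "lat_glb C X = (THE y. y \<in> C \<and> (\<forall>x\<in>X. y \<subseteq> x) \<and>
                         (\<forall>z\<in>C. (\<forall>x\<in>X. z \<subseteq> x) \<longrightarrow> z \<subseteq> y))"

definition is_uco :: "'b set set \<Rightarrow> 'b set set \<Rightarrow> bool" where
  "is_uco C D \<longleftrightarrow> D \<subseteq> C \<and> (\<forall>X. X \<subseteq> D \<longrightarrow> lat_glb C X \<in> D)"

text \<open>rho1 below rho2 iff image of rho2 is contained in image of rho1.\<close>
definition uco_le :: "'b set set \<Rightarrow> 'b set set \<Rightarrow> bool" where
  "uco_le D1 D2 \<longleftrightarrow> D2 \<subseteq> D1"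

definition uco_lub :: "'b set set \<Rightarrow> 'b set set set \<Rightarrow> 'b set set" where
  "uco_lub C S = (THE M. is_uco C M \<and> (\<forall>N\<in>S. uco_le N M) \<and>
      (\<forall>M'. is_uco C M' \<and> (\<forall>N\<in>S. uco_le N M') \<longrightarrow> uco_le M M'))"

definition uco_glb :: "'b set set \<Rightarrow> 'b set set set \<Rightarrow> 'b set set" where
  "uco_glb C S = (THE M. is_uco C M \<and> (\<forall>N\<in>S. uco_le M N) \<and>
      (\<forall>M'. is_uco C M' \<and> (\<forall>N\<in>S. uco_le M' N) \<longrightarrow> uco_le M' M))"

definition reduced_product :: "'b set set \<Rightarrow> 'b set set \<Rightarrow> 'b set set \<Rightarrow> 'b set set" where
  "reduced_product C D1 D2 = uco_glb C {D1, D2}"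

text \<open>Weak pseudo-complement C ~ D; the identity uco id_C has image C.\<close>
definition wpc :: "'b set set \<Rightarrow> 'b set set \<Rightarrow> 'b set set" where
  "wpc C D = uco_lub C {D2. is_uco C D2 \<and> reduced_product C D D2 = C}"

end

theory Submission
  imports Defs
begin

text \<open>
  PSD_plus is a Moore family of subsets of SG, so the upper closure operators on it are its
  meet-closed subfamilies, their reduced product is the Moore family generated by their union,
  and lubs are intersections. For a sharing group S and distinct x, y in S, the family
  omit_pair VI S x y of all sharing groups except those containing x and y inside S is
  completely meet-irreducible in PSD_plus, and every element of PSD_plus is a meet of such families.
  Those with S = VI are clique families and generate PS; those with S \<noteq> VI contain VI, so they
  lie in PSD_ddagger and generate it, but they are not in PS. Together PS and PSD_ddagger generate
  PSD_plus. Now if D and E jointly generate C and E is generated by meet-irreducibles outside D,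
  then every D2 with D \<sqinter> D2 = C contains these irreducibles, hence E, and so C \<sim> D = E.
  Applied to (PS, PSD_ddagger) and to (PSD_ddagger, PS) this gives both equations.
\<close>

section \<open>Upper closure operators on a Moore family\<close>

definition moore_family :: "'b set \<Rightarrow> 'b set set \<Rightarrow> bool" where
  "moore_family tp C \<longleftrightarrow> C \<subseteq> Pow tp \<and> (\<forall>X. X \<subseteq> C \<longrightarrow> tp \<inter> \<Inter>X \<in> C)"

definition moore_closure :: "'b set \<Rightarrow> 'b set set \<Rightarrow> 'b set set" where
  "moore_closure tp Y = {tp \<inter> \<Inter>X | X. X \<subseteq> Y}"

definition meet_irreducible :: "'b set \<Rightarrow> 'b set set \<Rightarrow> 'b set \<Rightarrow> bool" where
  "meet_irreducible tp C k \<longleftrightarrow> (\<forall>X. X \<subseteq> C \<and> k = tp \<inter> \<Inter>X \<longrightarrow> k \<in> X)"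

lemma lat_glb_moore_family:
  assumes "moore_family tp C" and "X \<subseteq> C"
  shows "lat_glb C X = tp \<inter> \<Inter>X"
  unfolding lat_glb_def
proof (rule the_equality)
  show "tp \<inter> \<Inter>X \<in> C \<and> (\<forall>x\<in>X. tp \<inter> \<Inter>X \<subseteq> x) \<and>
      (\<forall>z\<in>C. (\<forall>x\<in>X. z \<subseteq> x) \<longrightarrow> z \<subseteq> tp \<inter> \<Inter>X)"
    using assms unfolding moore_family_def by blast
next
  fix y assume y: "y \<in> C \<and> (\<forall>x\<in>X. y \<subseteq> x) \<and> (\<forall>z\<in>C. (\<forall>x\<in>X. z \<subseteq> x) \<longrightarrow> z \<subseteq> y)"
  have "tp \<inter> \<Inter>X \<in> C" and "y \<subseteq> tp"
    using assms y unfolding moore_family_def by blast+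
  moreover have "\<forall>x\<in>X. tp \<inter> \<Inter>X \<subseteq> x"
    by blast
  ultimately have "tp \<inter> \<Inter>X \<subseteq> y"
    using y by blast
  moreover have "y \<subseteq> \<Inter>X"
    using y by (simp add: Inf_greatest)
  ultimately show "y = tp \<inter> \<Inter>X"
    using \<open>y \<subseteq> tp\<close> by (meson le_inf_iff subset_antisym)
qed

lemma is_uco_moore_family_iff:
  assumes "moore_family tp C"
  shows "is_uco C D \<longleftrightarrow> D \<subseteq> C \<and> (\<forall>X. X \<subseteq> D \<longrightarrow> tp \<inter> \<Inter>X \<in> D)"
  using lat_glb_moore_family[OF assms] unfolding is_uco_def by (metis order_trans)

lemma subset_moore_closure: "Y \<subseteq> Pow tp \<Longrightarrow> Y \<subseteq> moore_closure tp Y"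
proof
  fix y assume "Y \<subseteq> Pow tp" and "y \<in> Y"
  then have "y = tp \<inter> \<Inter>{y}" and "{y} \<subseteq> Y"
    by auto
  then show "y \<in> moore_closure tp Y"
    unfolding moore_closure_def by blast
qed

lemma mem_moore_closureI: "X \<subseteq> Y \<Longrightarrow> S = tp \<inter> \<Inter>X \<Longrightarrow> S \<in> moore_closure tp Y"
  unfolding moore_closure_def by blast

lemma moore_closure_least:
  assumes "moore_family tp C" and "is_uco C D" and "Y \<subseteq> D"
  shows "moore_closure tp Y \<subseteq> D"
  using assms unfolding is_uco_moore_family_iff[OF assms(1)] moore_closure_def by blast

lemma is_uco_moore_closure:
  assumes C: "moore_family tp C" and "Y \<subseteq> C"
  shows "is_uco C (moore_closure tp Y)"
  unfolding is_uco_moore_family_iff[OF C]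
proof (intro conjI allI impI)
  show "moore_closure tp Y \<subseteq> C"
  proof
    fix S assume "S \<in> moore_closure tp Y"
    then obtain X where "X \<subseteq> Y" and "S = tp \<inter> \<Inter>X"
      unfolding moore_closure_def by blast
    with assms show "S \<in> C"
      unfolding moore_family_def by blast
  qed
next
  fix X assume "X \<subseteq> moore_closure tp Y"
  then have "\<forall>x\<in>X. \<exists>Z. Z \<subseteq> Y \<and> x = tp \<inter> \<Inter>Z"
    unfolding moore_closure_def by blast
  then obtain f where f: "\<forall>x\<in>X. f x \<subseteq> Y \<and> tp \<inter> \<Inter>(f x) = x"
    by metis
  have "tp \<inter> \<Inter>X = tp \<inter> \<Inter>(\<Union>(f ` X))"
  proof (intro equalityI subsetI)
    fix z assume z: "z \<in> tp \<inter> \<Inter>X"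
    have "z \<in> tp \<inter> \<Inter>(f x)" if "x \<in> X" for x
      using f z that by auto
    with z show "z \<in> tp \<inter> \<Inter>(\<Union>(f ` X))"
      by blast
  next
    fix z assume z: "z \<in> tp \<inter> \<Inter>(\<Union>(f ` X))"
    have "z \<in> x" if "x \<in> X" for x
    proof -
      have "z \<in> tp \<inter> \<Inter>(f x)"
        using z that by blast
      with f that show ?thesis
        by simp
    qed
    with z show "z \<in> tp \<inter> \<Inter>X"
      by blast
  qed
  moreover have "\<Union>(f ` X) \<subseteq> Y"
    using f by blast
  ultimately show "tp \<inter> \<Inter>X \<in> moore_closure tp Y"
    unfolding moore_closure_def by blast
qed

lemma is_uco_Inter:
  assumes C: "moore_family tp C" and "F \<noteq> {}" and "\<And>D. D \<in> F \<Longrightarrow> is_uco C D"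
  shows "is_uco C (\<Inter>F)"
  unfolding is_uco_moore_family_iff[OF C]
proof (intro conjI allI impI)
  obtain D where "D \<in> F"
    using assms(2) by blast
  then show "\<Inter>F \<subseteq> C"
    using assms(3) unfolding is_uco_def by blast
next
  fix X assume "X \<subseteq> \<Inter>F"
  then show "tp \<inter> \<Inter>X \<in> \<Inter>F"
    using assms(3) unfolding is_uco_moore_family_iff[OF C] by blast
qed

lemma reduced_product_moore_family:
  assumes C: "moore_family tp C" and "is_uco C D1" and "is_uco C D2"
  shows "reduced_product C D1 D2 = moore_closure tp (D1 \<union> D2)"
proof -
  have "D1 \<union> D2 \<subseteq> C"
    using assms unfolding is_uco_def by blast
  then have uco: "is_uco C (moore_closure tp (D1 \<union> D2))"
    using C by (rule is_uco_moore_closure[rotated])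
  have "D1 \<union> D2 \<subseteq> Pow tp"
    using \<open>D1 \<union> D2 \<subseteq> C\<close> C unfolding moore_family_def by blast
  then have ext: "D1 \<union> D2 \<subseteq> moore_closure tp (D1 \<union> D2)"
    by (rule subset_moore_closure)
  note least = moore_closure_least[OF C, of _ "D1 \<union> D2"]
  show ?thesis
    unfolding reduced_product_def uco_glb_def uco_le_def
  proof (rule the_equality)
    show "is_uco C (moore_closure tp (D1 \<union> D2)) \<and> (\<forall>N\<in>{D1, D2}. N \<subseteq> moore_closure tp (D1 \<union> D2)) \<and>
        (\<forall>M. is_uco C M \<and> (\<forall>N\<in>{D1, D2}. N \<subseteq> M) \<longrightarrow> moore_closure tp (D1 \<union> D2) \<subseteq> M)"
      using uco ext least by simp
    fix M assume M: "is_uco C M \<and> (\<forall>N\<in>{D1, D2}. N \<subseteq> M) \<and>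
        (\<forall>M'. is_uco C M' \<and> (\<forall>N\<in>{D1, D2}. N \<subseteq> M') \<longrightarrow> M \<subseteq> M')"
    with uco ext have "M \<subseteq> moore_closure tp (D1 \<union> D2)"
      by simp
    moreover from M have "moore_closure tp (D1 \<union> D2) \<subseteq> M"
      by (intro least) auto
    ultimately show "M = moore_closure tp (D1 \<union> D2)"
      by (rule subset_antisym)
  qed
qed

lemma uco_lub_eq_Inter:
  assumes C: "moore_family tp C" and "F \<noteq> {}" and "\<And>D. D \<in> F \<Longrightarrow> is_uco C D"
  shows "uco_lub C F = \<Inter>F"
  unfolding uco_lub_def uco_le_def
proof (rule the_equality)
  show "is_uco C (\<Inter>F) \<and> (\<forall>N\<in>F. \<Inter>F \<subseteq> N) \<and> (\<forall>M'. is_uco C M' \<and> (\<forall>N\<in>F. M' \<subseteq> N) \<longrightarrow> M' \<subseteq> \<Inter>F)"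
    using is_uco_Inter[OF assms(1-3)] by blast
  fix M assume "is_uco C M \<and> (\<forall>N\<in>F. M \<subseteq> N) \<and> (\<forall>M'. is_uco C M' \<and> (\<forall>N\<in>F. M' \<subseteq> N) \<longrightarrow> M' \<subseteq> M)"
  with is_uco_Inter[OF assms(1-3)] show "M = \<Inter>F"
    by (meson Inf_greatest Inf_lower subset_antisym)
qed

lemma wpc_eq_if_meet_irreducible_generators:
  assumes C: "moore_family tp C" and D: "is_uco C D" and E: "is_uco C E"
    and generate: "moore_closure tp (D \<union> E) = C"
    and "K \<subseteq> E" and "E \<subseteq> moore_closure tp K" and "K \<inter> D = {}"
    and irreducible: "\<And>k. k \<in> K \<Longrightarrow> meet_irreducible tp C k"
  shows "wpc C D = E"
proof -
  define F where "F = {D2. is_uco C D2 \<and> reduced_product C D D2 = C}"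
  have "E \<in> F"
    unfolding F_def using E reduced_product_moore_family[OF C D E] generate by simp
  have "E \<subseteq> D2" if "D2 \<in> F" for D2
  proof -
    from that have D2: "is_uco C D2" and generate2: "moore_closure tp (D \<union> D2) = C"
      unfolding F_def using reduced_product_moore_family[OF C D] by auto
    have "k \<in> D2" if "k \<in> K" for k
    proof -
      \<comment> \<open>k is a meet of elements of D and D2; being irreducible it is one of them, and it is not in D.\<close>
      have "k \<in> C"
        using \<open>K \<subseteq> E\<close> E that unfolding is_uco_def by blast
      then obtain X where X: "X \<subseteq> D \<union> D2" "k = tp \<inter> \<Inter>X"
        using generate2 unfolding moore_closure_def by blast
      moreover have "X \<subseteq> C"
        using X D D2 unfolding is_uco_def by blast
      ultimately have "k \<in> X"
        using irreducible[OF that] unfolding meet_irreducible_def by blast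
      with X \<open>K \<inter> D = {}\<close> that show "k \<in> D2"
        by blast
    qed
    then have "moore_closure tp K \<subseteq> D2"
      using moore_closure_least[OF C D2] by blast
    with \<open>E \<subseteq> moore_closure tp K\<close> show ?thesis
      by blast
  qed
  then have "\<Inter>F = E"
    using \<open>E \<in> F\<close> by (simp add: Inf_lower le_Inf_iff subset_antisym)
  moreover have "wpc C D = \<Inter>F"
    unfolding wpc_def F_def[symmetric]
    by (rule uco_lub_eq_Inter[OF C]) (use \<open>E \<in> F\<close> F_def in auto)
  ultimately show ?thesis
    by simp
qed

section \<open>PSD_plus as a Moore family\<close>

definition omit_pair :: "'a set \<Rightarrow> 'a set \<Rightarrow> 'a \<Rightarrow> 'a \<Rightarrow> 'a set set" where
  "omit_pair VI S x y = SG VI - {U. x \<in> U \<and> y \<in> U \<and> U \<subseteq> S}"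

definition covers_pairs :: "'a set set \<Rightarrow> 'a set \<Rightarrow> bool" where
  "covers_pairs sh S \<longleftrightarrow> (\<forall>a\<in>S. \<forall>b\<in>S. \<exists>U\<in>sh. a \<in> U \<and> b \<in> U \<and> U \<subseteq> S)"

definition pair_closed :: "'a set \<Rightarrow> 'a set set \<Rightarrow> bool" where
  "pair_closed VI sh \<longleftrightarrow> sh \<subseteq> SG VI \<and> (\<forall>x\<in>VI. {x} \<in> sh) \<and>
     (\<forall>S\<in>SG VI. covers_pairs sh S \<longrightarrow> S \<in> sh)"

lemma covers_pairs_mono: "sh \<subseteq> sh' \<Longrightarrow> covers_pairs sh S \<Longrightarrow> covers_pairs sh' S"
  unfolding covers_pairs_def by (meson subsetD)

lemma Union_cover_eq_iff:
  "S = \<Union>{U \<in> sh. T \<subseteq> U \<and> U \<subseteq> S} \<longleftrightarrow> (\<forall>b\<in>S. \<exists>U\<in>sh. T \<subseteq> U \<and> b \<in> U \<and> U \<subseteq> S)"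
proof
  assume "S = \<Union>{U \<in> sh. T \<subseteq> U \<and> U \<subseteq> S}"
  then show "\<forall>b\<in>S. \<exists>U\<in>sh. T \<subseteq> U \<and> b \<in> U \<and> U \<subseteq> S"
    by (metis (no_types, lifting) UnionE mem_Collect_eq)
next
  assume "\<forall>b\<in>S. \<exists>U\<in>sh. T \<subseteq> U \<and> b \<in> U \<and> U \<subseteq> S"
  then show "S = \<Union>{U \<in> sh. T \<subseteq> U \<and> U \<subseteq> S}"
    by (intro equalityI subsetI) (fastforce, auto)
qed

lemma mem_rho_PSD_iff:
  "S \<in> rho_PSD VI sh \<longleftrightarrow>
    S \<in> SG VI \<and> (\<forall>T. T \<subseteq> S \<and> card T < 2 \<longrightarrow> (\<forall>b\<in>S. \<exists>U\<in>sh. T \<subseteq> U \<and> b \<in> U \<and> U \<subseteq> S))"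
  unfolding rho_PSD_def Union_cover_eq_iff by simp

lemma rho_PSD_subset_SG: "rho_PSD VI sh \<subseteq> SG VI"
  by (auto simp: mem_rho_PSD_iff)

lemma subset_rho_PSD: "sh \<subseteq> SG VI \<Longrightarrow> sh \<subseteq> rho_PSD VI sh"
  unfolding subset_iff[of sh] mem_rho_PSD_iff by (meson order_refl subsetD)

lemma rho_PSD_idem: "rho_PSD VI (rho_PSD VI sh) \<subseteq> rho_PSD VI sh"
proof
  fix S assume "S \<in> rho_PSD VI (rho_PSD VI sh)"
  then have S: "S \<in> SG VI" and cover: "\<And>T b. T \<subseteq> S \<Longrightarrow> card T < 2 \<Longrightarrow> b \<in> S \<Longrightarrow>
      \<exists>U\<in>rho_PSD VI sh. T \<subseteq> U \<and> b \<in> U \<and> U \<subseteq> S"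
    unfolding mem_rho_PSD_iff[of S VI "rho_PSD VI sh"] by auto
  have "\<exists>V\<in>sh. T \<subseteq> V \<and> b \<in> V \<and> V \<subseteq> S" if T: "T \<subseteq> S" "card T < 2" and "b \<in> S" for T b
  proof -
    obtain U where U: "U \<in> rho_PSD VI sh" "T \<subseteq> U" "b \<in> U" "U \<subseteq> S"
      using cover[OF T \<open>b \<in> S\<close>] by auto
    then obtain V where "V \<in> sh" "T \<subseteq> V" "b \<in> V" "V \<subseteq> U"
      using T(2) unfolding mem_rho_PSD_iff by meson
    with U(4) show ?thesis
      by (meson order_trans)
  qed
  with S show "S \<in> rho_PSD VI sh"
    unfolding mem_rho_PSD_iff by auto
qed

lemma mem_PSD_iff: "sh \<in> PSD VI \<longleftrightarrow> sh \<subseteq> SG VI \<and> rho_PSD VI sh \<subseteq> sh"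
proof
  assume "sh \<in> PSD VI"
  then show "sh \<subseteq> SG VI \<and> rho_PSD VI sh \<subseteq> sh"
    unfolding PSD_def using rho_PSD_subset_SG rho_PSD_idem by blast
next
  assume "sh \<subseteq> SG VI \<and> rho_PSD VI sh \<subseteq> sh"
  then have "sh = rho_PSD VI sh" and "sh \<in> SH VI"
    using subset_rho_PSD unfolding SH_def by blast+
  then show "sh \<in> PSD VI"
    unfolding PSD_def by blast
qed

lemma rho_PSD_eq_covers_pairs:
  assumes "finite VI"
  shows "rho_PSD VI sh = {S \<in> SG VI. covers_pairs sh S}"
proof (intro equalityI subsetI)
  fix S assume "S \<in> rho_PSD VI sh"
  then have "S \<in> SG VI" and cover: "\<And>T b. T \<subseteq> S \<Longrightarrow> card T < 2 \<Longrightarrow> b \<in> S \<Longrightarrow>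
      \<exists>U\<in>sh. T \<subseteq> U \<and> b \<in> U \<and> U \<subseteq> S"
    unfolding mem_rho_PSD_iff by auto
  have "\<exists>U\<in>sh. a \<in> U \<and> b \<in> U \<and> U \<subseteq> S" if "a \<in> S" "b \<in> S" for a b
    using cover[of "{a}" b] that by auto
  with \<open>S \<in> SG VI\<close> show "S \<in> {S \<in> SG VI. covers_pairs sh S}"
    unfolding covers_pairs_def by auto
next
  fix S assume "S \<in> {S \<in> SG VI. covers_pairs sh S}"
  then have S: "S \<in> SG VI" and cov: "covers_pairs sh S"
    by auto
  \<comment> \<open>Finiteness is needed here: an infinite T also has card T < 2.\<close>
  have "\<exists>U\<in>sh. T \<subseteq> U \<and> b \<in> U \<and> U \<subseteq> S" if T: "T \<subseteq> S" "card T < 2" and "b \<in> S" for T b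
  proof -
    have "finite T"
      using T(1) S assms unfolding SG_def by (meson Diff_iff PowD finite_subset)
    with T(2) have "T = {} \<or> (\<exists>a. T = {a})"
      by (auto simp: less_2_cases_iff card_1_singleton_iff)
    then obtain a where "a \<in> S" "T \<subseteq> {a}"
      using T(1) \<open>b \<in> S\<close> by auto
    moreover obtain U where "U \<in> sh" "a \<in> U" "b \<in> U" "U \<subseteq> S"
      using cov \<open>a \<in> S\<close> \<open>b \<in> S\<close> unfolding covers_pairs_def by meson
    ultimately show ?thesis
      by (intro bexI[of _ U]) auto
  qed
  with S show "S \<in> rho_PSD VI sh"
    unfolding mem_rho_PSD_iff by auto
qed

lemma PSD_plus_iff_pair_closed:
  assumes "finite VI"
  shows "sh \<in> PSD_plus VI \<longleftrightarrow> pair_closed VI sh"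
  unfolding PSD_plus_def mem_PSD_iff pair_closed_def rho_PSD_eq_covers_pairs[OF assms] by blast

lemma pair_closed_Inter:
  assumes "\<And>sh. sh \<in> X \<Longrightarrow> pair_closed VI sh"
  shows "pair_closed VI (SG VI \<inter> \<Inter>X)"
  unfolding pair_closed_def
proof (intro conjI ballI impI)
  fix x assume "x \<in> VI"
  then show "{x} \<in> SG VI \<inter> \<Inter>X"
    using assms unfolding pair_closed_def SG_def by blast
next
  fix S assume "S \<in> SG VI" and "covers_pairs (SG VI \<inter> \<Inter>X) S"
  then have "S \<in> sh" if "sh \<in> X" for sh
    using assms[OF that] covers_pairs_mono[of "SG VI \<inter> \<Inter>X" sh] that unfolding pair_closed_def by blast
  with \<open>S \<in> SG VI\<close> show "S \<in> SG VI \<inter> \<Inter>X"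
    by blast
qed blast

lemma moore_family_PSD_plus:
  assumes "finite VI"
  shows "moore_family (SG VI) (PSD_plus VI)"
  unfolding moore_family_def
proof (intro conjI allI impI subsetI)
  fix sh assume "sh \<in> PSD_plus VI"
  then show "sh \<in> Pow (SG VI)"
    unfolding PSD_plus_iff_pair_closed[OF assms] pair_closed_def by auto
next
  fix X assume "X \<subseteq> PSD_plus VI"
  then have "\<And>sh. sh \<in> X \<Longrightarrow> pair_closed VI sh"
    using PSD_plus_iff_pair_closed[OF assms] by auto
  then show "SG VI \<inter> \<Inter>X \<in> PSD_plus VI"
    unfolding PSD_plus_iff_pair_closed[OF assms] by (rule pair_closed_Inter)
qed

lemma pair_closed_insert_VI:
  assumes "pair_closed VI sh" and "VI \<in> SG VI"
  shows "pair_closed VI (insert VI sh)"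
  unfolding pair_closed_def
proof (intro conjI ballI impI)
  fix S assume S: "S \<in> SG VI" and cov: "covers_pairs (insert VI sh) S"
  show "S \<in> insert VI sh"
  proof (cases "S = VI")
    case False
    with S have "VI \<notin> {U. U \<subseteq> S}"
      unfolding SG_def by blast
    with cov have "covers_pairs sh S"
      unfolding covers_pairs_def by (metis insert_iff mem_Collect_eq)
    with S assms(1) show ?thesis
      unfolding pair_closed_def by blast
  qed simp
qed (use assms in \<open>auto simp: pair_closed_def\<close>)

lemma pair_closed_separation:
  assumes cl: "pair_closed VI sh" and S: "S \<in> SG VI" "S \<notin> sh"
  shows "\<exists>a\<in>S. \<exists>b\<in>S. a \<noteq> b \<and> sh \<subseteq> omit_pair VI S a b"
proof -
  from assms obtain a b where ab: "a \<in> S" "b \<in> S" and uncovered: "\<not> (\<exists>U\<in>sh. a \<in> U \<and> b \<in> U \<and> U \<subseteq> S)"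
    unfolding pair_closed_def covers_pairs_def by blast
  have "{a} \<in> sh"
    using cl ab S(1) unfolding pair_closed_def SG_def by blast
  with ab uncovered have "a \<noteq> b"
    by blast
  moreover have "sh \<subseteq> omit_pair VI S a b"
    using cl uncovered unfolding pair_closed_def omit_pair_def by blast
  ultimately show ?thesis
    using ab by blast
qed

lemma pair_closed_eq_Inter_omit_pair:
  assumes "pair_closed VI sh"
  shows "sh = SG VI \<inter> \<Inter>{omit_pair VI S a b | S a b.
    S \<in> SG VI \<and> S \<notin> sh \<and> a \<in> S \<and> b \<in> S \<and> a \<noteq> b \<and> sh \<subseteq> omit_pair VI S a b}"
proof (intro equalityI subsetI)
  fix S assume S: "S \<in> SG VI \<inter> \<Inter>{omit_pair VI S a b | S a b.
    S \<in> SG VI \<and> S \<notin> sh \<and> a \<in> S \<and> b \<in> S \<and> a \<noteq> b \<and> sh \<subseteq> omit_pair VI S a b}"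
  show "S \<in> sh"
  proof (rule ccontr)
    assume "S \<notin> sh"
    moreover have "S \<in> SG VI"
      using S by blast
    ultimately obtain a b where "a \<in> S" "b \<in> S" "a \<noteq> b" "sh \<subseteq> omit_pair VI S a b"
      using pair_closed_separation[OF assms] by meson
    with S \<open>S \<notin> sh\<close> have "S \<in> omit_pair VI S a b"
      by blast
    with \<open>a \<in> S\<close> \<open>b \<in> S\<close> show False
      unfolding omit_pair_def by blast
  qed
qed (use assms in \<open>auto simp: pair_closed_def\<close>)

lemma pair_closed_omit_pair:
  assumes "x \<noteq> y"
  shows "pair_closed VI (omit_pair VI S x y)"
  unfolding pair_closed_def
proof (intro conjI ballI impI)
  fix S' assume S': "S' \<in> SG VI" and cov: "covers_pairs (omit_pair VI S x y) S'"
  show "S' \<in> omit_pair VI S x y"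
  proof (rule ccontr)
    assume "S' \<notin> omit_pair VI S x y"
    with S' have "x \<in> S'" "y \<in> S'" "S' \<subseteq> S"
      unfolding omit_pair_def by auto
    with cov show False
      unfolding covers_pairs_def omit_pair_def by blast
  qed
qed (use assms in \<open>auto simp: omit_pair_def SG_def\<close>)

lemma meet_irreducible_omit_pair:
  assumes fin: "finite VI" and S: "S \<in> SG VI" and xy: "x \<in> S" "y \<in> S" "x \<noteq> y"
  shows "meet_irreducible (SG VI) (PSD_plus VI) (omit_pair VI S x y)"
  unfolding meet_irreducible_def
proof (intro allI impI, elim conjE)
  fix X assume X: "X \<subseteq> PSD_plus VI" and eq: "omit_pair VI S x y = SG VI \<inter> \<Inter>X"
  have "S \<notin> omit_pair VI S x y"
    unfolding omit_pair_def using xy by blast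
  with eq S obtain sh where sh: "sh \<in> X" "S \<notin> sh"
    by blast
  have sub: "omit_pair VI S x y \<subseteq> sh"
    using eq sh(1) by blast
  have cl: "pair_closed VI sh"
    using X sh(1) PSD_plus_iff_pair_closed[OF fin] by blast
  \<comment> \<open>A U in sh with x, y \<in> U \<subseteq> S would make sh cover all pairs of S, forcing S \<in> sh.\<close>
  have "sh \<subseteq> omit_pair VI S x y"
  proof
    fix U assume U: "U \<in> sh"
    show "U \<in> omit_pair VI S x y"
    proof (rule ccontr)
      assume "U \<notin> omit_pair VI S x y"
      with U cl have Ux: "x \<in> U" "y \<in> U" "U \<subseteq> S"
        unfolding omit_pair_def pair_closed_def by auto
      have "\<exists>V\<in>sh. a \<in> V \<and> b \<in> V \<and> V \<subseteq> S" if ab: "a \<in> S" "b \<in> S" for a b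
      proof (cases "x \<in> {a, b} \<and> y \<in> {a, b}")
        case True
        with Ux xy(3) U show ?thesis
          by auto
      next
        case False
        with ab S have "{a, b} \<in> omit_pair VI S x y"
          unfolding omit_pair_def SG_def by auto
        with sub ab show ?thesis
          by blast
      qed
      with cl S sh(2) show False
        unfolding pair_closed_def covers_pairs_def by blast
    qed
  qed
  with sub sh(1) show "omit_pair VI S x y \<in> X"
    by (metis subset_antisym)
qed

section \<open>Clique families\<close>

definition cliques :: "'a set \<Rightarrow> ('a \<Rightarrow> 'a \<Rightarrow> bool) \<Rightarrow> 'a set set" where
  "cliques VI E = {S \<in> SG VI. \<forall>a\<in>S. \<forall>b\<in>S. a \<noteq> b \<longrightarrow> E a b}"

lemma pairs_subset_pairs_sh_iff:
  "pairs S \<subseteq> pairs_sh sh \<longleftrightarrow> (\<forall>a\<in>S. \<forall>b\<in>S. a \<noteq> b \<longrightarrow> (\<exists>U\<in>sh. a \<in> U \<and> b \<in> U))"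
proof
  assume pairs: "pairs S \<subseteq> pairs_sh sh"
  show "\<forall>a\<in>S. \<forall>b\<in>S. a \<noteq> b \<longrightarrow> (\<exists>U\<in>sh. a \<in> U \<and> b \<in> U)"
  proof (intro ballI impI)
    fix a b assume "a \<in> S" "b \<in> S" "a \<noteq> b"
    then have "{a, b} \<in> pairs S"
      unfolding pairs_def by auto
    with pairs obtain U where "U \<in> sh" "{a, b} \<in> pairs U"
      unfolding pairs_sh_def by blast
    then show "\<exists>U\<in>sh. a \<in> U \<and> b \<in> U"
      unfolding pairs_def by auto
  qed
next
  assume covered: "\<forall>a\<in>S. \<forall>b\<in>S. a \<noteq> b \<longrightarrow> (\<exists>U\<in>sh. a \<in> U \<and> b \<in> U)"
  show "pairs S \<subseteq> pairs_sh sh"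
  proof
    fix T assume "T \<in> pairs S"
    then obtain a b where T: "T = {a, b}" "a \<noteq> b" "a \<in> S" "b \<in> S"
      unfolding pairs_def by (auto simp: card_2_iff)
    with covered obtain U where "U \<in> sh" "a \<in> U" "b \<in> U"
      by meson
    with T show "T \<in> pairs_sh sh"
      unfolding pairs_sh_def pairs_def by auto
  qed
qed

lemma rho_PS_eq_cliques: "rho_PS VI sh = cliques VI (\<lambda>a b. \<exists>U\<in>sh. a \<in> U \<and> b \<in> U)"
  unfolding rho_PS_def cliques_def pairs_subset_pairs_sh_iff ..

lemma rho_PS_cliques: "rho_PS VI (cliques VI E) = cliques VI E"
  unfolding rho_PS_eq_cliques by (auto simp: cliques_def)

lemma PS_eq_range_cliques: "PS VI = range (cliques VI)"
proof (intro equalityI subsetI)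
  fix p assume "p \<in> PS VI"
  then show "p \<in> range (cliques VI)"
    unfolding PS_def rho_PS_eq_cliques by auto
next
  fix p assume "p \<in> range (cliques VI)"
  then obtain E where "p = cliques VI E"
    by auto
  moreover have "cliques VI E \<in> SH VI"
    unfolding SH_def cliques_def by auto
  ultimately show "p \<in> PS VI"
    unfolding PS_def using rho_PS_cliques by (metis image_eqI)
qed

lemma pair_closed_cliques: "pair_closed VI (cliques VI E)"
  unfolding pair_closed_def
proof (intro conjI ballI impI)
  fix S assume S: "S \<in> SG VI" and cov: "covers_pairs (cliques VI E) S"
  have "E a b" if ab: "a \<in> S" "b \<in> S" "a \<noteq> b" for a b
  proof -
    obtain U where "U \<in> cliques VI E" "a \<in> U" "b \<in> U"
      using cov ab unfolding covers_pairs_def by meson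
    with \<open>a \<noteq> b\<close> show "E a b"
      unfolding cliques_def by blast
  qed
  with S show "S \<in> cliques VI E"
    unfolding cliques_def by blast
qed (auto simp: cliques_def SG_def)

lemma Inter_cliques: "SG VI \<inter> (\<Inter>E\<in>Es. cliques VI E) = cliques VI (\<lambda>a b. \<forall>E\<in>Es. E a b)"
  unfolding cliques_def by auto

lemma cliques_eq_SG_if_VI_mem: "VI \<in> cliques VI E \<Longrightarrow> cliques VI E = SG VI"
  unfolding cliques_def SG_def by auto

lemma omit_pair_VI_eq_cliques:
  assumes "x \<noteq> y"
  shows "omit_pair VI VI x y = cliques VI (\<lambda>a b. {a, b} \<noteq> {x, y})"
  using assms unfolding omit_pair_def cliques_def SG_def by (auto simp: doubleton_eq_iff)

lemma cliques_eq_Inter_omit_pair: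
  "cliques VI E = SG VI \<inter> \<Inter>{omit_pair VI VI x y | x y. x \<in> VI \<and> y \<in> VI \<and> x \<noteq> y \<and> \<not> E x y}"
  unfolding cliques_def omit_pair_def SG_def by auto

section \<open>The two weak pseudo-complements\<close>

definition PSD_ddagger :: "'a set \<Rightarrow> 'a set set set" where
  "PSD_ddagger VI = {sh \<in> PSD_plus VI. VI \<in> sh}"

lemma PSD_ddagger_eq: "PSD_ddagger VI = {sh \<in> PSD VI. VI \<in> sh \<and> (\<forall>x\<in>VI. {x} \<in> sh)}"
  unfolding PSD_ddagger_def PSD_plus_def by auto

lemma VI_mem_SG: "VI \<noteq> {} \<Longrightarrow> VI \<in> SG VI"
  unfolding SG_def by auto

context
  fixes VI :: "'a set"
  assumes fin: "finite VI" and nonempty: "VI \<noteq> {}"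
begin

lemma is_uco_PS: "is_uco (PSD_plus VI) (PS VI)"
  unfolding is_uco_moore_family_iff[OF moore_family_PSD_plus[OF fin]]
proof (intro conjI allI impI)
  show "PS VI \<subseteq> PSD_plus VI"
    using pair_closed_cliques PSD_plus_iff_pair_closed[OF fin] by (auto simp: PS_eq_range_cliques)
next
  fix X assume "X \<subseteq> PS VI"
  then obtain Es where "X = cliques VI ` Es"
    unfolding PS_eq_range_cliques by (auto simp: subset_image_iff)
  then show "SG VI \<inter> \<Inter>X \<in> PS VI"
    unfolding PS_eq_range_cliques by (simp add: Inter_cliques)
qed

lemma is_uco_PSD_ddagger: "is_uco (PSD_plus VI) (PSD_ddagger VI)"
  unfolding is_uco_moore_family_iff[OF moore_family_PSD_plus[OF fin]]
proof (intro conjI allI impI)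
  fix X assume "X \<subseteq> PSD_ddagger VI"
  moreover have "SG VI \<inter> \<Inter>X \<in> PSD_plus VI" if "X \<subseteq> PSD_plus VI"
    using moore_family_PSD_plus[OF fin] that unfolding moore_family_def by blast
  ultimately show "SG VI \<inter> \<Inter>X \<in> PSD_ddagger VI"
    using VI_mem_SG[OF nonempty] unfolding PSD_ddagger_def by auto
qed (auto simp: PSD_ddagger_def)

lemma moore_closure_PS_PSD_ddagger: "moore_closure (SG VI) (PS VI \<union> PSD_ddagger VI) = PSD_plus VI"
proof (intro equalityI subsetI)
  fix sh assume "sh \<in> moore_closure (SG VI) (PS VI \<union> PSD_ddagger VI)"
  moreover have "PS VI \<union> PSD_ddagger VI \<subseteq> PSD_plus VI"
    using is_uco_PS is_uco_PSD_ddagger unfolding is_uco_def by auto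
  ultimately show "sh \<in> PSD_plus VI"
    using is_uco_moore_closure[OF moore_family_PSD_plus[OF fin]] unfolding is_uco_def by blast
next
  fix sh assume sh: "sh \<in> PSD_plus VI"
  then have cl: "pair_closed VI sh"
    using PSD_plus_iff_pair_closed[OF fin] by simp
  show "sh \<in> moore_closure (SG VI) (PS VI \<union> PSD_ddagger VI)"
  proof (cases "VI \<in> sh")
    case True
    with sh cl show ?thesis
      unfolding PSD_ddagger_def pair_closed_def by (intro mem_moore_closureI[of "{sh}"]) auto
  next
    case False
    then obtain x y where xy: "x \<in> VI" "y \<in> VI" "x \<noteq> y" and sub: "sh \<subseteq> omit_pair VI VI x y"
      using pair_closed_separation[OF cl VI_mem_SG[OF nonempty]] by blast
    \<comment> \<open>sh is the meet of a clique family and of sh with VI added.\<close>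
    have "omit_pair VI VI x y \<in> PS VI"
      unfolding PS_eq_range_cliques omit_pair_VI_eq_cliques[OF xy(3)] by simp
    moreover have "insert VI sh \<in> PSD_ddagger VI"
      using pair_closed_insert_VI[OF cl VI_mem_SG[OF nonempty]] PSD_plus_iff_pair_closed[OF fin]
      unfolding PSD_ddagger_def by simp
    moreover have "VI \<notin> omit_pair VI VI x y"
      using xy unfolding omit_pair_def by blast
    with sub cl have "sh = SG VI \<inter> \<Inter>{omit_pair VI VI x y, insert VI sh}"
      unfolding pair_closed_def by auto
    ultimately show ?thesis
      by (intro mem_moore_closureI[of "{omit_pair VI VI x y, insert VI sh}"]) auto
  qed
qed

lemma wpc_PS_eq_PSD_ddagger: "wpc (PSD_plus VI) (PS VI) = PSD_ddagger VI"
proof -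
  define K where "K = {omit_pair VI S x y | S x y. S \<in> SG VI \<and> S \<noteq> VI \<and> x \<in> S \<and> y \<in> S \<and> x \<noteq> y}"
  have "K \<subseteq> PSD_ddagger VI"
  proof
    fix k assume "k \<in> K"
    then obtain S x y where k: "k = omit_pair VI S x y" "S \<in> SG VI" "S \<noteq> VI" "x \<in> S" "y \<in> S" "x \<noteq> y"
      unfolding K_def by blast
    then have "VI \<in> k"
      using VI_mem_SG[OF nonempty] unfolding omit_pair_def SG_def by auto
    with k show "k \<in> PSD_ddagger VI"
      unfolding PSD_ddagger_def PSD_plus_iff_pair_closed[OF fin] using pair_closed_omit_pair by simp
  qed
  moreover have "PSD_ddagger VI \<subseteq> moore_closure (SG VI) K"
  proof
    fix sh assume sh: "sh \<in> PSD_ddagger VI"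
    then have cl: "pair_closed VI sh"
      unfolding PSD_ddagger_def PSD_plus_iff_pair_closed[OF fin] by simp
    show "sh \<in> moore_closure (SG VI) K"
      using sh pair_closed_eq_Inter_omit_pair[OF cl]
      by (intro mem_moore_closureI) (auto simp: K_def PSD_ddagger_def)
  qed
  moreover have "K \<inter> PS VI = {}"
  proof -
    have "k \<notin> range (cliques VI)" if "k \<in> K" for k
    proof
      assume "k \<in> range (cliques VI)"
      moreover have "VI \<in> k"
        using that \<open>K \<subseteq> PSD_ddagger VI\<close> unfolding PSD_ddagger_def by blast
      ultimately have "k = SG VI"
        using cliques_eq_SG_if_VI_mem by auto
      moreover from that obtain S x y where "k = omit_pair VI S x y" "S \<in> SG VI" "x \<in> S" "y \<in> S"
        unfolding K_def by blast
      ultimately show False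
        unfolding omit_pair_def by auto
    qed
    then show ?thesis
      unfolding PS_eq_range_cliques by blast
  qed
  moreover have "meet_irreducible (SG VI) (PSD_plus VI) k" if "k \<in> K" for k
    using that meet_irreducible_omit_pair[OF fin] unfolding K_def by blast
  ultimately show ?thesis
    by (intro wpc_eq_if_meet_irreducible_generators[OF moore_family_PSD_plus[OF fin] is_uco_PS
          is_uco_PSD_ddagger moore_closure_PS_PSD_ddagger]) auto
qed

lemma wpc_PSD_ddagger_eq_PS: "wpc (PSD_plus VI) (PSD_ddagger VI) = PS VI"
proof -
  define K where "K = {omit_pair VI VI x y | x y. x \<in> VI \<and> y \<in> VI \<and> x \<noteq> y}"
  have "K \<subseteq> PS VI"
    unfolding K_def PS_eq_range_cliques by (auto simp: omit_pair_VI_eq_cliques)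
  moreover have "PS VI \<subseteq> moore_closure (SG VI) K"
  proof
    fix p assume "p \<in> PS VI"
    then obtain E where "p = cliques VI E"
      unfolding PS_eq_range_cliques by auto
    then show "p \<in> moore_closure (SG VI) K"
      unfolding cliques_eq_Inter_omit_pair by (intro mem_moore_closureI) (auto simp: K_def)
  qed
  moreover have "K \<inter> PSD_ddagger VI = {}"
    unfolding K_def PSD_ddagger_def omit_pair_def by auto
  moreover have "meet_irreducible (SG VI) (PSD_plus VI) k" if "k \<in> K" for k
    using that meet_irreducible_omit_pair[OF fin VI_mem_SG[OF nonempty]] unfolding K_def by blast
  moreover have "moore_closure (SG VI) (PSD_ddagger VI \<union> PS VI) = PSD_plus VI"
    using moore_closure_PS_PSD_ddagger by (simp add: Un_commute)
  ultimately show ?thesis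
    by (intro wpc_eq_if_meet_irreducible_generators[OF moore_family_PSD_plus[OF fin]
          is_uco_PSD_ddagger is_uco_PS]) auto
qed

end

theorem theorem5p2:
  fixes VI :: "'a set"
  assumes "finite VI" and "VI \<noteq> {}"
  shows "wpc (PSD_plus VI) (PS VI) = {sh \<in> PSD VI. VI \<in> sh \<and> (\<forall>x\<in>VI. {x} \<in> sh)}
     \<and> wpc (PSD_plus VI) (wpc (PSD_plus VI) (PS VI)) = PS VI"
  using wpc_PS_eq_PSD_ddagger[OF assms] wpc_PSD_ddagger_eq_PS[OF assms] PSD_ddagger_eq by simp

end
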